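(* Consider the variety of nonempty sets (i.e. left $S$-acts over the trivial monoid $S=\{1\}$). Two nonempty sets $G_1,G_2$ are geometrically equivalent if and only if either $|G_1|=|G_2|=1$, or both $|G_1|\ge 2$ and $|G_2|\ge 2$. Thus there are exactly two geometric equivalence classes: the singletons, and all sets with more than one element.
   Context: For nonempty sets, the free object on a nonempty finite set $X$ is $X$ itself, homomorphisms are arbitrary maps, and congruences are equivalence relations. For a set $G$ and a binary relation $T\subseteq X\times X$, let $T'_G=\{\mu:X\to G : T\subseteq\ker\mu\}$, where $\ker\mu=\{(x,y):\mu(x)=\mu(y)\}$, and $T''_G=\bigcap_{\mu\in T'_G}\ker\mu$ (empty intersection $=X\times X$). Sets $G_1,G_2$ are geometrically equivalent iff $T''_{G_1}=T''_{G_2}$ for every nonempty finite set $X$ and every relation $T\subseteq X\times X$. *)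

theory Defs
  imports Main
begin

definition ker_on :: "'x set \<Rightarrow> ('x \<Rightarrow> 'g) \<Rightarrow> ('x \<times> 'x) set" where
  "ker_on X mu = {(x, y). x \<in> X \<and> y \<in> X \<and> mu x = mu y}"

definition T_prime :: "'g set \<Rightarrow> 'x set \<Rightarrow> ('x \<times> 'x) set \<Rightarrow> ('x \<Rightarrow> 'g) set" where
  "T_prime G X T = {mu. mu ` X \<subseteq> G \<and> T \<subseteq> ker_on X mu}"

text \<open>T''_G: intersection of the kernels (empty intersection = X x X).\<close>
definition T_closure :: "'g set \<Rightarrow> 'x set \<Rightarrow> ('x \<times> 'x) set \<Rightarrow> ('x \<times> 'x) set" where
  "T_closure G X T = (X \<times> X) \<inter> (\<Inter>mu \<in> T_prime G X T. ker_on X mu)"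

text \<open>Geometric equivalence; finite nonempty sets X are represented (up to bijection)
  by finite nonempty sets of natural numbers.\<close>
definition geom_equiv :: "'g1 set \<Rightarrow> 'g2 set \<Rightarrow> bool" where
  "geom_equiv G1 G2 \<longleftrightarrow>
     (\<forall>X :: nat set. finite X \<and> X \<noteq> {} \<longrightarrow>
        (\<forall>T. T \<subseteq> X \<times> X \<longrightarrow> T_closure G1 X T = T_closure G2 X T))"

end

theory Submission
  imports Defs
begin

text \<open>Over a singleton every map is constant, so no pair is ever separated and T'' is all of
  X \<times> X. Over a set with two distinct elements g1, g2 a map into G is, for the purpose of its
  kernel, no finer than the two-colouring of X it induces by "hits g1 or not", and every subset
  A of X gives such a colouring; hence T'' consists exactly of the pairs that no T-saturated
  subset of X separates, independently of G. The two classes are distinguished by the empty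
  relation on a two-element X.\<close>

definition unseparated :: "'x set \<Rightarrow> ('x \<times> 'x) set \<Rightarrow> ('x \<times> 'x) set" where
  "unseparated X T =
     {(x, y). x \<in> X \<and> y \<in> X \<and>
        (\<forall>A. (\<forall>(u, v) \<in> T. u \<in> A \<longleftrightarrow> v \<in> A) \<longrightarrow> (x \<in> A \<longleftrightarrow> y \<in> A))}"

lemma unseparated_empty: "unseparated X {} = Id_on X"
  unfolding unseparated_def Id_on_def by (auto dest: spec[of _ "{_}"])

lemma T_closure_singleton:
  assumes "G = {a}"
  shows "T_closure G X T = X \<times> X"
  using assms unfolding T_closure_def T_prime_def ker_on_def by auto

lemma T_closure_eq_unseparated:
  assumes "g1 \<in> G" "g2 \<in> G" "g1 \<noteq> g2" and T: "T \<subseteq> X \<times> X"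
  shows "T_closure G X T = unseparated X T"
proof (intro equalityI subsetI)
  fix p assume p: "p \<in> T_closure G X T"
  then obtain x y where p_eq: "p = (x, y)" and x: "x \<in> X" and y: "y \<in> X"
    unfolding T_closure_def by blast
  have "x \<in> A \<longleftrightarrow> y \<in> A" if A: "\<forall>(u, v) \<in> T. u \<in> A \<longleftrightarrow> v \<in> A" for A
  proof -
    define mu where "mu z = (if z \<in> A then g1 else g2)" for z
    have "mu \<in> T_prime G X T"
      unfolding T_prime_def ker_on_def mu_def using assms A by auto
    then have "(x, y) \<in> ker_on X mu" using p p_eq unfolding T_closure_def by blast
    then show ?thesis unfolding ker_on_def mu_def using assms by (auto split: if_splits)
  qed
  then show "p \<in> unseparated X T" using x y p_eq unfolding unseparated_def by blast
next
  fix p assume p: "p \<in> unseparated X T"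
  then obtain x y where p_eq: "p = (x, y)" and x: "x \<in> X" and y: "y \<in> X"
    and unsep: "\<And>A. \<forall>(u, v) \<in> T. u \<in> A \<longleftrightarrow> v \<in> A \<Longrightarrow> x \<in> A \<longleftrightarrow> y \<in> A"
    unfolding unseparated_def by blast
  have "(x, y) \<in> ker_on X mu" if mu: "mu \<in> T_prime G X T" for mu
  proof -
    have "\<forall>(u, v) \<in> T. u \<in> {z. mu z = mu x} \<longleftrightarrow> v \<in> {z. mu z = mu x}"
      using mu unfolding T_prime_def ker_on_def by auto
    then have "x \<in> {z. mu z = mu x} \<longleftrightarrow> y \<in> {z. mu z = mu x}" by (rule unsep)
    then show ?thesis using x y unfolding ker_on_def by simp
  qed
  then show "p \<in> T_closure G X T" using x y p_eq unfolding T_closure_def by blast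
qed

corollary T_closure_empty:
  assumes "g1 \<in> G" "g2 \<in> G" "g1 \<noteq> g2"
  shows "T_closure G X {} = Id_on X"
  using T_closure_eq_unseparated[OF assms] unseparated_empty by blast

lemma T_closure_empty_pair_full_iff:
  assumes "G \<noteq> {}" and "x \<noteq> y"
  shows "T_closure G {x, y} {} = {x, y} \<times> {x, y} \<longleftrightarrow> (\<exists>a. G = {a})"
proof (cases "\<exists>g1 g2. g1 \<in> G \<and> g2 \<in> G \<and> g1 \<noteq> g2")
  case True
  then obtain g1 g2 where "g1 \<in> G" "g2 \<in> G" "g1 \<noteq> g2" by blast
  then have "T_closure G {x, y} {} = Id_on {x, y}" by (rule T_closure_empty)
  moreover have "(x, y) \<notin> Id_on {x, y}" using \<open>x \<noteq> y\<close> by blast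
  ultimately show ?thesis using True by auto
next
  case False
  with \<open>G \<noteq> {}\<close> obtain a where "G = {a}" by blast
  moreover from \<open>G = {a}\<close> have "T_closure G {x, y} {} = {x, y} \<times> {x, y}"
    by (rule T_closure_singleton)
  ultimately show ?thesis by blast
qed

theorem theorem3p2:
  fixes G1 :: "'a set" and G2 :: "'b set"
  assumes "G1 \<noteq> {}" and "G2 \<noteq> {}"
  shows "geom_equiv G1 G2 \<longleftrightarrow>
           ((\<exists>a. G1 = {a}) \<and> (\<exists>b. G2 = {b})) \<or>
           ((\<exists>a1 a2. a1 \<in> G1 \<and> a2 \<in> G1 \<and> a1 \<noteq> a2) \<and>
            (\<exists>b1 b2. b1 \<in> G2 \<and> b2 \<in> G2 \<and> b1 \<noteq> b2))"
    (is "_ \<longleftrightarrow> (?single1 \<and> ?single2) \<or> (?two1 \<and> ?two2)")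
proof
  assume "geom_equiv G1 G2"
  then have eq: "T_closure G1 {0::nat, 1} {} = T_closure G2 {0, 1} {}"
    unfolding geom_equiv_def by simp
  have "T_closure G1 {0::nat, 1} {} = {0, 1} \<times> {0, 1} \<longleftrightarrow> ?single1"
    by (rule T_closure_empty_pair_full_iff[OF assms(1)]) simp
  moreover have "T_closure G2 {0::nat, 1} {} = {0, 1} \<times> {0, 1} \<longleftrightarrow> ?single2"
    by (rule T_closure_empty_pair_full_iff[OF assms(2)]) simp
  ultimately have "?single1 \<longleftrightarrow> ?single2" unfolding eq by blast
  then show "(?single1 \<and> ?single2) \<or> (?two1 \<and> ?two2)" using assms by blast
next
  assume classes: "(?single1 \<and> ?single2) \<or> (?two1 \<and> ?two2)"
  show "geom_equiv G1 G2"
    unfolding geom_equiv_def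
  proof (intro allI impI)
    fix X :: "nat set" and T :: "(nat \<times> nat) set" assume T: "T \<subseteq> X \<times> X"
    from classes show "T_closure G1 X T = T_closure G2 X T"
    proof
      assume "?single1 \<and> ?single2"
      then show ?thesis using T_closure_singleton by metis
    next
      assume "?two1 \<and> ?two2"
      then show ?thesis using T_closure_eq_unseparated[OF _ _ _ T] by metis
    qed
  qed
qed

end
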